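(* Let $\kappa>1$, $\alpha\in(0,1)$, and on $E=\mathbb R$ with $d(x,y)=|x-y|$ let $$q(x,y)=\frac{e^{|y|^\kappa}}{|x-y|^{1+\alpha}}1_{\{|x-y|\le1\}},\qquad \mu(\mathrm dx)=c_\kappa e^{-|x|^\kappa}\mathrm dx,$$ with $c_\kappa$ the normalizing constant making $\mu$ a probability measure. Let $H>4$, $L>\frac{\kappa H^\kappa}{H-2}$ and $$V(x)=K_0+L\sum_{n=1}^\infty 1_{[nH,(n+1)H)}(x)(n+1)^{\kappa-1}\Big(2n+1-\frac{2x}{H}\Big),$$ where $K_0\in\mathbb R$ is such that $\mu(e^V)=1$. Then there exist constants $C_1>0$ and $K\in\mathbb R$ such that $$-C_1(1+|x|^{\kappa-1})-K\le V(x)\le C_1(1+|x|^{\kappa-1})+K,\qquad x\in\mathbb R;$$ however, for every $C>0$ the Poincaré inequality $$\mu_V(f^2)\le C\,\mathcal E_V(f)+\mu_V(f)^2,\qquad f\in\mathcal D(\mathcal E_V),$$ fails.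
   Context: For $f,g$ bounded measurable, $\Gamma(f,g)(x)=\int(f(x)-f(y))(g(x)-g(y))q(x,y)\mu(\mathrm dy)$; $\mathcal A$ is the set of bounded measurable $f$ with $\Gamma(f,f)$ bounded. $\mu_V(\mathrm dx)=e^{V(x)}\mu(\mathrm dx)$, and $(\mathcal E_V,\mathcal D(\mathcal E_V))$ is the closure in $L^2(\mu_V)$ of the form $\mathcal E_V(f,g)=\int\Gamma(f,g)\,\mathrm d\mu_V$ on $\mathcal A$; $\mathcal E_V(f)=\mathcal E_V(f,f)$. *)

theory Defs
  imports "HOL-Analysis.Analysis"
begin

definition c_kappa :: "real \<Rightarrow> real" where
  "c_kappa \<kappa> = inverse (LINT x|lborel. exp (- (\<bar>x\<bar> powr \<kappa>)))"

definition mu :: "real \<Rightarrow> real measure" where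
  "mu \<kappa> = density lborel (\<lambda>x. ennreal (c_kappa \<kappa> * exp (- (\<bar>x\<bar> powr \<kappa>))))"

definition qker :: "real \<Rightarrow> real \<Rightarrow> real \<Rightarrow> real \<Rightarrow> real" where
  "qker \<kappa> \<alpha> x y = exp (\<bar>y\<bar> powr \<kappa>) / \<bar>x - y\<bar> powr (1 + \<alpha>) * indicator {..1} \<bar>x - y\<bar>"

definition Gamma :: "real measure \<Rightarrow> (real \<Rightarrow> real \<Rightarrow> real) \<Rightarrow> (real \<Rightarrow> real) \<Rightarrow> (real \<Rightarrow> real) \<Rightarrow> real \<Rightarrow> real" where
  "Gamma M q f g x = (LINT y|M. (f x - f y) * (g x - g y) * q x y)"

definition classA :: "real measure \<Rightarrow> (real \<Rightarrow> real \<Rightarrow> real) \<Rightarrow> (real \<Rightarrow> real) set" where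
  "classA M q = {f. f \<in> borel_measurable borel \<and> bounded (range f)
      \<and> (\<forall>x. integrable M (\<lambda>y. (f x - f y) * (f x - f y) * q x y))
      \<and> bounded (range (Gamma M q f f))}"

definition Vpot :: "real \<Rightarrow> real \<Rightarrow> real \<Rightarrow> real \<Rightarrow> real \<Rightarrow> real" where
  "Vpot \<kappa> H L K0 x = K0 + L * (\<Sum>n. if n \<ge> 1 then indicator {real n * H ..< (real n + 1) * H} x
        * (real n + 1) powr (\<kappa> - 1) * (2 * real n + 1 - 2 * x / H) else 0)"

definition muV :: "real measure \<Rightarrow> (real \<Rightarrow> real) \<Rightarrow> real measure" where
  "muV M V = density M (\<lambda>x. ennreal (exp (V x)))"

definition EV :: "real measure \<Rightarrow> (real \<Rightarrow> real \<Rightarrow> real) \<Rightarrow> (real \<Rightarrow> real) \<Rightarrow> (real \<Rightarrow> real) \<Rightarrow> real" where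
  "EV M q V f = (LINT x|muV M V. Gamma M q f f x)"

text \<open>Closure in L^2(N) of a quadratic form E defined on a class A:
  form_closure N A E f c  means  f belongs to the domain of the closure and its
  closed-form value is c, i.e. there are f_n in A with f_n \<rightarrow> f in L^2(N),
  (f_n) E-Cauchy, and E(f_n) \<rightarrow> c.\<close>
definition form_closure :: "real measure \<Rightarrow> (real \<Rightarrow> real) set \<Rightarrow> ((real \<Rightarrow> real) \<Rightarrow> real)
    \<Rightarrow> (real \<Rightarrow> real) \<Rightarrow> real \<Rightarrow> bool" where
  "form_closure N A E f c \<longleftrightarrow>
     f \<in> borel_measurable N \<and> integrable N (\<lambda>x. (f x)\<^sup>2) \<and>
     (\<exists>s. (\<forall>n. s n \<in> A) \<and>
        (\<lambda>n. LINT x|N. (s n x - f x)\<^sup>2) \<longlonglongrightarrow> 0 \<and>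
        (\<forall>e>0. \<exists>N0. \<forall>m\<ge>N0. \<forall>n\<ge>N0. E (\<lambda>x. s n x - s m x) < e) \<and>
        (\<lambda>n. E (s n)) \<longlonglongrightarrow> c)"

end

theory Submission
  imports Defs
begin

text \<open>
  On each block [nH, (n+1)H) the potential V decreases linearly by 2L(n+1)^{\<kappa>-1}, so
  |V - K0| \<le> L |x|^{\<kappa>-1}; but at each block boundary nH it jumps up by about 2L n^{\<kappa>-1}.
  Across the window [nH-2-\<delta>, nH+\<delta>] the factor e^{-|x|^\<kappa>} loses only about
  \<kappa> (nH)^{\<kappa>-1} (2+2\<delta>), and the hypothesis on L makes the jump win: the density of \<mu>_V
  just right of nH exceeds its values just left of nH and of (n+1)H by a factor of order
  exp(c n^{\<kappa>-1}). A Lipschitz bump f equal to 1 on [nH-1, (n+1)H-1-\<delta>] has \<Gamma>(f,f)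
  supported where the density is small (q has range 1), so E_V(f) is negligible compared with
  \<mu>_V(f^2), while \<mu>_V(f) \<le> \<mu>_V([nH-2, \<infinity>)) is small. For large n this contradicts the
  Poincare inequality.
\<close>

lemma nat_floor_block:
  fixes H x :: real
  assumes "H > 0" and "H \<le> x"
  shows "1 \<le> nat \<lfloor>x / H\<rfloor>" and "real (nat \<lfloor>x / H\<rfloor>) * H \<le> x"
    and "x < (real (nat \<lfloor>x / H\<rfloor>) + 1) * H"
proof -
  have "1 \<le> \<lfloor>x / H\<rfloor>" using assms by simp
  hence m: "real (nat \<lfloor>x / H\<rfloor>) = of_int \<lfloor>x / H\<rfloor>" by simp
  show "1 \<le> nat \<lfloor>x / H\<rfloor>" using \<open>1 \<le> \<lfloor>x / H\<rfloor>\<close> by linarith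
  show "real (nat \<lfloor>x / H\<rfloor>) * H \<le> x"
    unfolding m using assms(1) by (simp add: pos_le_divide_eq[symmetric])
  show "x < (real (nat \<lfloor>x / H\<rfloor>) + 1) * H"
    unfolding m using assms(1) by (simp add: pos_divide_less_eq[symmetric])
qed

lemma Vpot_on_block:
  fixes m :: nat
  assumes "H > 0" and "m \<ge> 1" and "real m * H \<le> x" and "x < (real m + 1) * H"
  shows "Vpot \<kappa> H L K0 x = K0 + L * ((real m + 1) powr (\<kappa> - 1) * (2 * real m + 1 - 2 * x / H))"
proof -
  let ?g = "\<lambda>n::nat. if n \<ge> 1 then indicator {real n * H ..< (real n + 1) * H} x
        * (real n + 1) powr (\<kappa> - 1) * (2 * real n + 1 - 2 * x / H) else (0::real)"
  have other_blocks: "x \<notin> {real n * H ..< (real n + 1) * H}" if "n \<noteq> m" for n :: nat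
  proof
    assume "x \<in> {real n * H ..< (real n + 1) * H}"
    hence "real n * H \<le> x" "x < (real n + 1) * H" by auto
    with assms(3,4) have "real n * H < (real m + 1) * H" "real m * H < (real n + 1) * H" by linarith+
    with \<open>H > 0\<close> have "real n < real m + 1" "real m < real n + 1"
      by (simp_all add: mult_less_cancel_right)
    with that show False by linarith
  qed
  have single: "?g = (\<lambda>n. if n = m then ?g m else 0)"
  proof
    fix n
    show "?g n = (if n = m then ?g m else 0)"
      using other_blocks[of n] by (cases "n = m") (simp_all add: indicator_def)
  qed
  have "?g sums ?g m" by (subst single) (rule sums_single)
  moreover have "?g m = (real m + 1) powr (\<kappa> - 1) * (2 * real m + 1 - 2 * x / H)"
    using assms by (simp add: indicator_def)
  ultimately show ?thesis unfolding Vpot_def by (simp add: sums_iff)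
qed

lemma Vpot_below_H:
  assumes "H > 0" and "x < H"
  shows "Vpot \<kappa> H L K0 x = K0"
proof -
  have "x \<notin> {real n * H ..< (real n + 1) * H}" if "n \<ge> 1" for n :: nat
  proof -
    have "H \<le> real n * H" using assms that by simp
    thus ?thesis using assms(2) by simp
  qed
  hence "(if n \<ge> 1 then indicator {real n * H ..< (real n + 1) * H} x
        * (real n + 1) powr (\<kappa> - 1) * (2 * real n + 1 - 2 * x / H) else (0::real)) = 0" for n :: nat
    by (simp add: indicator_def)
  thus ?thesis unfolding Vpot_def by simp
qed

lemma Vpot_eq_floor:
  assumes "H > 0"
  shows "Vpot \<kappa> H L K0 = (\<lambda>x. if x < H then K0 else K0 + L * ((real (nat \<lfloor>x / H\<rfloor>) + 1) powr (\<kappa> - 1)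
      * (2 * real (nat \<lfloor>x / H\<rfloor>) + 1 - 2 * x / H)))"
proof
  fix x
  show "Vpot \<kappa> H L K0 x = (if x < H then K0 else K0 + L * ((real (nat \<lfloor>x / H\<rfloor>) + 1) powr (\<kappa> - 1)
      * (2 * real (nat \<lfloor>x / H\<rfloor>) + 1 - 2 * x / H)))"
    using Vpot_below_H[OF assms] Vpot_on_block[OF assms nat_floor_block[OF assms]] by (simp add: not_less)
qed

lemma Vpot_deviation_le:
  assumes "H \<ge> 2" and "L \<ge> 0" and "\<kappa> \<ge> 1"
  shows "\<bar>Vpot \<kappa> H L K0 x - K0\<bar> \<le> L * \<bar>x\<bar> powr (\<kappa> - 1)"
proof (cases "x < H")
  case True
  thus ?thesis using Vpot_below_H[of H x] assms by simp
next
  case False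
  define m where "m = nat \<lfloor>x / H\<rfloor>"
  have H0: "H > 0" using assms by simp
  have m1: "m \<ge> 1" and x1: "real m * H \<le> x" and x2: "x < (real m + 1) * H"
    using nat_floor_block[OF H0] False unfolding m_def by auto
  have "2 * real m \<le> 2 * x / H" "2 * x / H < 2 * real m + 2"
    using x1 x2 H0 by (simp_all add: field_simps)
  hence slope: "\<bar>2 * real m + 1 - 2 * x / H\<bar> \<le> 1" by linarith
  have "real m * 2 \<le> real m * H" using assms by (intro mult_left_mono) auto
  hence "real m + 1 \<le> real m * H" using m1 by linarith
  hence growth: "(real m + 1) powr (\<kappa> - 1) \<le> \<bar>x\<bar> powr (\<kappa> - 1)"
    using x1 assms by (intro powr_mono2) auto
  have "\<bar>Vpot \<kappa> H L K0 x - K0\<bar> = L * ((real m + 1) powr (\<kappa> - 1) * \<bar>2 * real m + 1 - 2 * x / H\<bar>)"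
    using Vpot_on_block[OF H0 m1 x1 x2] assms by (simp add: abs_mult)
  also have "\<dots> \<le> L * ((real m + 1) powr (\<kappa> - 1) * 1)"
    using slope assms by (intro mult_left_mono) auto
  also have "\<dots> \<le> L * \<bar>x\<bar> powr (\<kappa> - 1)"
    using growth assms by (simp add: mult_left_mono)
  finally show ?thesis .
qed

lemma Vpot_growth_bound:
  assumes "H \<ge> 2" and "L > 0" and "\<kappa> \<ge> 1"
  shows "\<exists>C1>0. \<exists>K. \<forall>x::real.
            - C1 * (1 + \<bar>x\<bar> powr (\<kappa> - 1)) - K \<le> Vpot \<kappa> H L K0 x
          \<and> Vpot \<kappa> H L K0 x \<le> C1 * (1 + \<bar>x\<bar> powr (\<kappa> - 1)) + K"
proof (intro exI conjI allI)
  fix x :: real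
  have "\<bar>Vpot \<kappa> H L K0 x - K0\<bar> \<le> L * \<bar>x\<bar> powr (\<kappa> - 1)"
    using Vpot_deviation_le assms by simp
  thus "- L * (1 + \<bar>x\<bar> powr (\<kappa> - 1)) - \<bar>K0\<bar> \<le> Vpot \<kappa> H L K0 x"
    and "Vpot \<kappa> H L K0 x \<le> L * (1 + \<bar>x\<bar> powr (\<kappa> - 1)) + \<bar>K0\<bar>"
    using assms by (auto simp: algebra_simps abs_le_iff)
qed (use assms in simp)

lemma powr_diff_le_mvt:
  fixes u w \<kappa> :: real
  assumes "0 < w" and "w \<le> u" and "\<kappa> \<ge> 1"
  shows "u powr \<kappa> - w powr \<kappa> \<le> \<kappa> * u powr (\<kappa> - 1) * (u - w)"
proof (cases "w = u")
  case False
  hence "w < u" using assms by simp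
  have "DERIV (\<lambda>t. t powr \<kappa>) t :> \<kappa> * t powr (\<kappa> - 1)" if "w \<le> t" "t \<le> u" for t
    using assms that by (intro has_real_derivative_powr) auto
  then obtain t where t: "w < t" "t < u"
    and mvt: "u powr \<kappa> - w powr \<kappa> = (u - w) * (\<kappa> * t powr (\<kappa> - 1))"
    using MVT2[OF \<open>w < u\<close>, of "\<lambda>t. t powr \<kappa>" "\<lambda>t. \<kappa> * t powr (\<kappa> - 1)"] by blast
  have "t powr (\<kappa> - 1) \<le> u powr (\<kappa> - 1)" using t assms by (intro powr_mono2) auto
  hence "(u - w) * (\<kappa> * t powr (\<kappa> - 1)) \<le> (u - w) * (\<kappa> * u powr (\<kappa> - 1))"
    using \<open>w < u\<close> assms by (intro mult_left_mono) auto
  thus ?thesis using mvt by (simp add: algebra_simps)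
qed simp

definition trapezoid :: "real \<Rightarrow> real \<Rightarrow> real \<Rightarrow> real \<Rightarrow> real" where
  "trapezoid a b \<delta> y = max 0 (min 1 (min ((y - a) / \<delta>) ((b - y) / \<delta>)))"

lemma trapezoid_measurable [measurable]: "trapezoid a b \<delta> \<in> borel_measurable borel"
  unfolding trapezoid_def by measurable

lemma trapezoid_nonneg: "0 \<le> trapezoid a b \<delta> y"
  and trapezoid_le_1: "trapezoid a b \<delta> y \<le> 1"
  unfolding trapezoid_def by auto

lemma bounded_range_trapezoid: "bounded (range (trapezoid a b \<delta>))"
  unfolding bounded_real using trapezoid_nonneg trapezoid_le_1
  by (intro exI[of _ 1]) (auto simp: abs_le_iff intro: order_trans[of _ 0])

lemma trapezoid_lipschitz:
  assumes "\<delta> > 0"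
  shows "\<bar>trapezoid a b \<delta> x - trapezoid a b \<delta> y\<bar> \<le> \<bar>x - y\<bar> / \<delta>"
proof -
  have clamp: "\<bar>max 0 (min 1 t) - max 0 (min 1 s)\<bar> \<le> \<bar>t - s\<bar>" for t s :: real
    by (auto simp: max_def min_def abs_if)
  have "\<bar>min p q - min p' q'\<bar> \<le> max \<bar>p - p'\<bar> \<bar>q - q'\<bar>" for p q p' q' :: real
    by (auto simp: max_def min_def abs_if)
  hence "\<bar>trapezoid a b \<delta> x - trapezoid a b \<delta> y\<bar>
      \<le> max \<bar>(x - a) / \<delta> - (y - a) / \<delta>\<bar> \<bar>(b - x) / \<delta> - (b - y) / \<delta>\<bar>"
    unfolding trapezoid_def by (meson clamp order_trans)
  also have "\<dots> = \<bar>x - y\<bar> / \<delta>" using assms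
    by (simp add: diff_divide_distrib[symmetric] abs_minus_commute)
  finally show ?thesis .
qed

lemma trapezoid_eq_0_left: "\<delta> > 0 \<Longrightarrow> y \<le> a \<Longrightarrow> trapezoid a b \<delta> y = 0"
  unfolding trapezoid_def
  by (intro max_absorb1 min.coboundedI2 min.coboundedI1) (simp add: divide_nonpos_pos)

lemma trapezoid_eq_0_right: "\<delta> > 0 \<Longrightarrow> b \<le> y \<Longrightarrow> trapezoid a b \<delta> y = 0"
  unfolding trapezoid_def
  by (intro max_absorb1 min.coboundedI2) (simp add: divide_nonpos_pos)

lemma trapezoid_eq_1: "\<delta> > 0 \<Longrightarrow> a + \<delta> \<le> y \<Longrightarrow> y \<le> b - \<delta> \<Longrightarrow> trapezoid a b \<delta> y = 1"
  unfolding trapezoid_def by (auto simp: min_def max_def le_divide_eq)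

lemma qker_measurable [measurable]: "qker \<kappa> \<alpha> x \<in> borel_measurable borel"
  unfolding qker_def by measurable

lemma Gamma_eq_0_if_locally_const:
  assumes "\<And>y. \<bar>x - y\<bar> \<le> 1 \<Longrightarrow> f y = f x"
  shows "Gamma M (qker \<kappa> \<alpha>) f f x = 0"
proof -
  have "(f x - f y) * (f x - f y) * qker \<kappa> \<alpha> x y = 0" for y
    using assms[of y] by (cases "\<bar>x - y\<bar> \<le> 1") (auto simp: qker_def)
  hence "(\<lambda>y. (f x - f y) * (f x - f y) * qker \<kappa> \<alpha> x y) = (\<lambda>y. 0)" by (intro ext)
  thus ?thesis unfolding Gamma_def by simp
qed

text \<open>The weight e^{|y|^\<kappa>} in q(x,y) cancels the density of \<mu>, and t^2 \<le> t^{1+\<alpha>}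
  for 0 < t \<le> 1 since \<alpha> \<le> 1.\<close>
lemma weighted_qker_le:
  fixes c d x y \<delta> :: real
  assumes "\<bar>d\<bar> \<le> \<bar>x - y\<bar> / \<delta>" and "\<delta> > 0" and "\<alpha> \<le> 1" and "c \<ge> 0"
  shows "c * exp (- (\<bar>y\<bar> powr \<kappa>)) * (d * d * qker \<kappa> \<alpha> x y) \<le> c / \<delta>\<^sup>2 * indicator {x - 1 .. x + 1} y"
proof (cases "\<bar>x - y\<bar> \<le> 1 \<and> x \<noteq> y")
  case False
  thus ?thesis using assms by (auto simp: qker_def indicator_def abs_le_iff)
next
  case True
  define t where "t = \<bar>x - y\<bar>"
  have t: "0 < t" "t \<le> 1" using True t_def by auto
  have "\<bar>d\<bar> * \<bar>d\<bar> \<le> (t / \<delta>) * (t / \<delta>)"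
    using assms(1) by (intro mult_mono) (auto simp: t_def)
  hence "d * d \<le> t\<^sup>2 / \<delta>\<^sup>2" by (simp add: abs_mult_self_eq power2_eq_square)
  also have "t\<^sup>2 / \<delta>\<^sup>2 \<le> t powr (1 + \<alpha>) / \<delta>\<^sup>2"
  proof -
    have "t\<^sup>2 = t powr 2" using t by (simp add: powr_numeral)
    also have "\<dots> \<le> t powr (1 + \<alpha>)" using t assms by (intro powr_mono') auto
    finally show ?thesis by (simp add: divide_right_mono)
  qed
  finally have "d * d / t powr (1 + \<alpha>) \<le> 1 / \<delta>\<^sup>2"
    using t by (simp add: pos_divide_le_eq)
  hence "c * (d * d / t powr (1 + \<alpha>)) \<le> c / \<delta>\<^sup>2"
    using assms(4) mult_left_mono by fastforce
  moreover have "exp (- (\<bar>y\<bar> powr \<kappa>)) * exp (\<bar>y\<bar> powr \<kappa>) = 1" by (simp add: exp_minus)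
  ultimately show ?thesis
    using True by (simp add: qker_def t_def indicator_def abs_le_iff field_simps)
qed

lemma form_closure_of_mem:
  assumes "f \<in> A" and "f \<in> borel_measurable N" and "integrable N (\<lambda>x. (f x)\<^sup>2)"
    and "E (\<lambda>x. 0) = 0"
  shows "form_closure N A E f (E f)"
  unfolding form_closure_def using assms by (intro conjI exI[of _ "\<lambda>n. f"]) auto

lemma EV_zero: "EV M q V (\<lambda>x. 0) = 0"
  unfolding EV_def Gamma_def by simp

lemma c_kappa_nonneg: "c_kappa \<kappa> \<ge> 0"
  unfolding c_kappa_def by simp

lemma sets_mu [measurable_cong]: "sets (mu \<kappa>) = sets borel"
  by (simp add: mu_def)

lemma sets_muV [measurable_cong]: "sets (muV (mu \<kappa>) V) = sets borel"
  by (simp add: muV_def mu_def)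

lemma space_muV [simp]: "space (muV (mu \<kappa>) V) = UNIV"
  by (simp add: muV_def mu_def)

lemma
  assumes [measurable]: "h \<in> borel_measurable borel"
  shows integral_mu: "integral\<^sup>L (mu \<kappa>) h = (LINT x|lborel. c_kappa \<kappa> * exp (- (\<bar>x\<bar> powr \<kappa>)) * h x)"
    and integrable_mu_iff:
      "integrable (mu \<kappa>) h \<longleftrightarrow> integrable lborel (\<lambda>x. c_kappa \<kappa> * exp (- (\<bar>x\<bar> powr \<kappa>)) * h x)"
  unfolding mu_def using c_kappa_nonneg
  by (subst integral_density integrable_density; auto)+

lemma poincare_violation_arith:
  fixes A B E C G p s z :: real
  assumes "p \<le> A" and "B \<le> A + z" and "0 \<le> B" and "B \<le> s" and "s < 1/2"
    and "E \<le> G * z" and "C \<ge> 0" and "z \<ge> 0" and "2 * (1 + C * G) * z < p"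
  shows "\<not> A \<le> C * E + B\<^sup>2"
proof
  assume poincare: "A \<le> C * E + B\<^sup>2"
  have "B\<^sup>2 \<le> B * s" unfolding power2_eq_square using assms by (intro mult_left_mono)
  also have "\<dots> \<le> (A + z) * (1/2)" using assms by (intro mult_mono) auto
  finally have "B\<^sup>2 \<le> (A + z) / 2" by simp
  moreover have "C * E \<le> C * (G * z)" using assms by (intro mult_left_mono)
  ultimately have "A \<le> 2 * (C * (G * z)) + z" using poincare by argo
  moreover have "2 * (1 + C * G) * z = 2 * (C * (G * z)) + 2 * z" by (simp add: algebra_simps)
  ultimately show False using assms by linarith
qed

locale potential_perturbation =
  fixes \<kappa> \<alpha> H L K0 :: real
  assumes kappa_gt_1: "\<kappa> > 1" and alpha_le_1: "\<alpha> \<le> 1"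
    and H_gt_4: "H > 4" and L_gt: "L > \<kappa> * H powr \<kappa> / (H - 2)"
    and expV_normalized: "(LINT x|mu \<kappa>. exp (Vpot \<kappa> H L K0 x)) = 1"
begin

abbreviation V :: "real \<Rightarrow> real" where "V \<equiv> Vpot \<kappa> H L K0"

abbreviation \<nu> :: "real measure" where "\<nu> \<equiv> muV (mu \<kappa>) V"

definition log_density :: "real \<Rightarrow> real" where
  "log_density x = V x - \<bar>x\<bar> powr \<kappa>"

lemma H_pos: "H > 0"
  using H_gt_4 by simp

lemma L_pos: "L > 0"
proof -
  have "0 < \<kappa> * H powr \<kappa> / (H - 2)" using kappa_gt_1 H_gt_4 by simp
  thus ?thesis using L_gt by linarith
qed

lemma Vpot_measurable [measurable]: "V \<in> borel_measurable borel"
  by (subst Vpot_eq_floor[OF H_pos]) measurable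

lemma log_density_measurable [measurable]: "log_density \<in> borel_measurable borel"
  unfolding log_density_def by measurable

lemma integrable_expV: "integrable (mu \<kappa>) (\<lambda>x. exp (V x))"
  using expV_normalized not_integrable_integral_eq by fastforce

lemma c_kappa_pos: "c_kappa \<kappa> > 0"
proof (rule ccontr)
  assume "\<not> c_kappa \<kappa> > 0"
  hence "c_kappa \<kappa> = 0" using c_kappa_nonneg[of \<kappa>] by simp
  hence "(LINT x|mu \<kappa>. exp (V x)) = 0" by (subst integral_mu) auto
  thus False using expV_normalized by simp
qed

lemma muV_eq_density: "\<nu> = density lborel (\<lambda>x. ennreal (c_kappa \<kappa> * exp (log_density x)))"
  unfolding muV_def mu_def log_density_def using c_kappa_nonneg[of \<kappa>]
  by (subst density_density_eq) (auto simp: ennreal_mult[symmetric] exp_diff exp_minus field_simps)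

lemma finite_measure_muV: "finite_measure \<nu>"
proof
  have "emeasure \<nu> (space \<nu>) = (\<integral>\<^sup>+ x. ennreal (exp (V x)) \<partial>mu \<kappa>)"
    unfolding muV_def by (subst emeasure_density) auto
  also have "\<dots> = ennreal (LINT x|mu \<kappa>. exp (V x))"
    using integrable_expV by (intro nn_integral_eq_integral) auto
  finally show "emeasure \<nu> (space \<nu>) \<noteq> \<infinity>" by simp
qed

lemma integrable_muV_bounded:
  fixes h :: "real \<Rightarrow> real"
  assumes "h \<in> borel_measurable borel" and "\<And>x. \<bar>h x\<bar> \<le> B"
  shows "integrable \<nu> h"
proof (rule finite_measure.integrable_const_bound[OF finite_measure_muV])
  show "AE x in \<nu>. norm (h x) \<le> B" using assms(2) by simp
  show "h \<in> borel_measurable \<nu>" using assms(1) by measurable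
qed

lemma integrable_muV_indicator: "S \<in> sets borel \<Longrightarrow> integrable \<nu> (indicator S :: real \<Rightarrow> real)"
  by (intro integrable_muV_bounded[of _ 1]) (auto simp: indicator_def)

lemma integral_muV_indicator:
  assumes "S \<in> sets borel" and "emeasure lborel S < \<infinity>"
  shows "measure \<nu> S = (LINT x|lborel. c_kappa \<kappa> * exp (log_density x) * indicator S x)"
    and "integrable lborel (\<lambda>x. c_kappa \<kappa> * exp (log_density x) * indicator S x)"
proof -
  have "integrable \<nu> (indicator S :: real \<Rightarrow> real)" using assms(1) by (rule integrable_muV_indicator)
  thus "integrable lborel (\<lambda>x. c_kappa \<kappa> * exp (log_density x) * indicator S x)"
    using c_kappa_nonneg[of \<kappa>] assms unfolding muV_eq_density
    by (subst (asm) integrable_density) auto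
  have "measure \<nu> S = integral\<^sup>L \<nu> (indicator S)" by simp
  also have "\<dots> = (LINT x|lborel. c_kappa \<kappa> * exp (log_density x) * indicator S x)"
    using c_kappa_nonneg[of \<kappa>] assms unfolding muV_eq_density
    by (subst integral_density) auto
  finally show "measure \<nu> S = (LINT x|lborel. c_kappa \<kappa> * exp (log_density x) * indicator S x)" .
qed

lemma measure_muV_le:
  assumes "S \<in> sets borel" and "emeasure lborel S < \<infinity>" and "\<And>x. x \<in> S \<Longrightarrow> log_density x \<le> a"
  shows "measure \<nu> S \<le> c_kappa \<kappa> * exp a * measure lborel S"
proof -
  have "measure \<nu> S \<le> (LINT x|lborel. c_kappa \<kappa> * exp a * indicator S x)"
    unfolding integral_muV_indicator(1)[OF assms(1,2)]
    using integral_muV_indicator(2)[OF assms(1,2)] assms c_kappa_nonneg[of \<kappa>]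
    by (intro integral_mono integrable_mult_right integrable_real_indicator)
      (auto simp: indicator_def intro!: mult_left_mono)
  thus ?thesis using assms by simp
qed

lemma measure_muV_ge:
  assumes "S \<in> sets borel" and "emeasure lborel S < \<infinity>" and "\<And>x. x \<in> S \<Longrightarrow> a \<le> log_density x"
  shows "c_kappa \<kappa> * exp a * measure lborel S \<le> measure \<nu> S"
proof -
  have "(LINT x|lborel. c_kappa \<kappa> * exp a * indicator S x) \<le> measure \<nu> S"
    unfolding integral_muV_indicator(1)[OF assms(1,2)]
    using integral_muV_indicator(2)[OF assms(1,2)] assms c_kappa_nonneg[of \<kappa>]
    by (intro integral_mono integrable_mult_right integrable_real_indicator)
      (auto simp: indicator_def intro!: mult_left_mono)
  thus ?thesis using assms by simp
qed

lemma Gamma_lipschitz: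
  assumes [measurable]: "f \<in> borel_measurable borel" and "\<delta> > 0"
    and lip: "\<And>x y. \<bar>f x - f y\<bar> \<le> \<bar>x - y\<bar> / \<delta>"
  shows "integrable (mu \<kappa>) (\<lambda>y. (f x - f y) * (f x - f y) * qker \<kappa> \<alpha> x y)"
    and "0 \<le> Gamma (mu \<kappa>) (qker \<kappa> \<alpha>) f f x"
    and "Gamma (mu \<kappa>) (qker \<kappa> \<alpha>) f f x \<le> 2 * c_kappa \<kappa> / \<delta>\<^sup>2"
proof -
  let ?c = "c_kappa \<kappa>"
  let ?g = "\<lambda>y. ?c * exp (- (\<bar>y\<bar> powr \<kappa>)) * ((f x - f y) * (f x - f y) * qker \<kappa> \<alpha> x y)"
  let ?b = "\<lambda>y. ?c / \<delta>\<^sup>2 * indicator {x - 1 .. x + 1} y :: real"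
  have g_nonneg: "0 \<le> ?g y" for y
    using c_kappa_nonneg[of \<kappa>] by (auto simp: qker_def)
  have g_le: "?g y \<le> ?b y" for y
    using weighted_qker_le[OF lip \<open>\<delta> > 0\<close> alpha_le_1 c_kappa_nonneg] .
  have b_int: "integrable lborel ?b"
    by (intro integrable_mult_right integrable_real_indicator) auto
  have g_int: "integrable lborel ?g"
  proof (rule Bochner_Integration.integrable_bound[OF b_int])
    show "AE y in lborel. norm (?g y) \<le> norm (?b y)"
    proof (rule AE_I2)
      fix y
      have "norm (?g y) = ?g y" using g_nonneg[of y] by simp
      also have "\<dots> \<le> ?b y" by (rule g_le)
      also have "\<dots> = norm (?b y)" using c_kappa_nonneg[of \<kappa>] by simp
      finally show "norm (?g y) \<le> norm (?b y)" .
    qed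
  qed measurable
  thus "integrable (mu \<kappa>) (\<lambda>y. (f x - f y) * (f x - f y) * qker \<kappa> \<alpha> x y)"
    by (subst integrable_mu_iff) auto
  have Gamma_eq: "Gamma (mu \<kappa>) (qker \<kappa> \<alpha>) f f x = integral\<^sup>L lborel ?g"
    unfolding Gamma_def by (subst integral_mu) auto
  show "0 \<le> Gamma (mu \<kappa>) (qker \<kappa> \<alpha>) f f x"
    unfolding Gamma_eq using g_nonneg by simp
  have "integral\<^sup>L lborel ?g \<le> integral\<^sup>L lborel ?b"
    using g_int b_int g_le by (intro integral_mono) auto
  thus "Gamma (mu \<kappa>) (qker \<kappa> \<alpha>) f f x \<le> 2 * c_kappa \<kappa> / \<delta>\<^sup>2"
    unfolding Gamma_eq by (simp add: mult.commute)
qed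

lemma lipschitz_in_classA:
  assumes "f \<in> borel_measurable borel" and "bounded (range f)" and "\<delta> > 0"
    and "\<And>x y. \<bar>f x - f y\<bar> \<le> \<bar>x - y\<bar> / \<delta>"
  shows "f \<in> classA (mu \<kappa>) (qker \<kappa> \<alpha>)"
proof -
  have "bounded (range (Gamma (mu \<kappa>) (qker \<kappa> \<alpha>) f f))"
    unfolding bounded_real using Gamma_lipschitz(2,3)[OF assms(1,3,4)] by fastforce
  thus ?thesis
    unfolding classA_def using assms Gamma_lipschitz(1)[OF assms(1,3,4)] by blast
qed

lemma EV_le_measure:
  assumes "S \<in> sets borel" and "G \<ge> 0"
    and "\<And>x. Gamma (mu \<kappa>) (qker \<kappa> \<alpha>) f f x \<le> G * indicator S x"
  shows "EV (mu \<kappa>) (qker \<kappa> \<alpha>) V f \<le> G * measure \<nu> S"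
proof -
  have "EV (mu \<kappa>) (qker \<kappa> \<alpha>) V f \<le> (LINT x|\<nu>. G * indicator S x)"
    unfolding EV_def
    using assms by (intro integral_mono' integrable_muV_bounded[of _ G]) (auto simp: indicator_def)
  thus ?thesis by simp
qed

definition jump_margin :: "real \<Rightarrow> real" where
  "jump_margin \<delta> = L * (2 - (4 + 4 * \<delta>) / H) - \<kappa> * (2 + 2 * \<delta>) * (H + \<delta>) powr (\<kappa> - 1)"

context
  fixes n :: nat and \<delta> :: real
  assumes n_ge_2: "n \<ge> 2" and \<delta>_pos: "0 < \<delta>" and \<delta>_le_1: "\<delta> \<le> 1" and \<delta>_le_H: "2 * \<delta> \<le> H - 4"
begin

abbreviation bump :: "real \<Rightarrow> real" where
  "bump \<equiv> trapezoid (real n * H - 1 - \<delta>) ((real n + 1) * H - 1) \<delta>"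

text \<open>Outside ramp_nbhd the bump is constant on [x-1, x+1], so \<Gamma>(bump, bump) vanishes there.\<close>
abbreviation ramp_nbhd :: "real set" where
  "ramp_nbhd \<equiv> {real n * H - 2 - \<delta> ..< real n * H} \<union> {(real n + 1) * H - 2 - \<delta> ..< (real n + 1) * H}"

abbreviation plateau :: "real set" where
  "plateau \<equiv> {real n * H .. real n * H + \<delta>}"

abbreviation slope_margin :: real where
  "slope_margin \<equiv> 1 - (4 + 2 * \<delta>) / H"

abbreviation ramp_max :: real where
  "ramp_max \<equiv> K0 - L * real n powr (\<kappa> - 1) * slope_margin - (real n * H - 2 - \<delta>) powr \<kappa>"

abbreviation plateau_min :: real where
  "plateau_min \<equiv> K0 + L * real n powr (\<kappa> - 1) * (1 - 2 * \<delta> / H) - (real n * H + \<delta>) powr \<kappa>"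

lemma nH_ge_8: "8 \<le> real n * H"
  using n_ge_2 H_gt_4 mult_mono[of 2 "real n" 4 H] by simp

lemma outside_ramp_nbhd_cases:
  assumes "x \<notin> ramp_nbhd"
  shows "x < real n * H - 2 - \<delta> \<or> (real n * H \<le> x \<and> x < (real n + 1) * H - 2 - \<delta>) \<or> (real n + 1) * H \<le> x"
proof -
  have "real n * H \<le> (real n + 1) * H - 2 - \<delta>" using H_gt_4 \<delta>_le_1 by (simp add: algebra_simps)
  thus ?thesis using assms by auto
qed

lemma bump_locally_const:
  assumes "x \<notin> ramp_nbhd" and "\<bar>x - y\<bar> \<le> 1"
  shows "bump y = bump x"
  using outside_ramp_nbhd_cases[OF assms(1)] assms(2) \<delta>_pos
  by (auto simp: abs_le_iff trapezoid_eq_0_left trapezoid_eq_0_right trapezoid_eq_1)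

lemma bump_outside_ramp_nbhd: "x \<notin> ramp_nbhd \<Longrightarrow> bump x = 0 \<or> bump x = 1"
  using bump_locally_const[of x x] outside_ramp_nbhd_cases[of x] \<delta>_pos
  by (auto simp: trapezoid_eq_0_left trapezoid_eq_0_right trapezoid_eq_1)

lemma bump_on_plateau: "x \<in> plateau \<Longrightarrow> bump x = 1"
  using \<delta>_pos \<delta>_le_1 H_gt_4 by (intro trapezoid_eq_1) (auto simp: algebra_simps)

lemma bump_le_tail_indicator: "bump x \<le> indicator {real n * H - 2 ..} x"
  using trapezoid_le_1 trapezoid_eq_0_left[OF \<delta>_pos, of x] \<delta>_le_1
  by (cases "real n * H - 2 \<le> x") (auto simp: indicator_def)

lemma EV_bump_le: "EV (mu \<kappa>) (qker \<kappa> \<alpha>) V bump \<le> 2 * c_kappa \<kappa> / \<delta>\<^sup>2 * measure \<nu> ramp_nbhd"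
proof (rule EV_le_measure)
  fix x
  show "Gamma (mu \<kappa>) (qker \<kappa> \<alpha>) bump bump x \<le> 2 * c_kappa \<kappa> / \<delta>\<^sup>2 * indicator ramp_nbhd x"
  proof (cases "x \<in> ramp_nbhd")
    case True
    thus ?thesis using Gamma_lipschitz(3)[OF _ \<delta>_pos trapezoid_lipschitz[OF \<delta>_pos]] by simp
  next
    case False
    thus ?thesis using Gamma_eq_0_if_locally_const[OF bump_locally_const] by simp
  qed
qed (use c_kappa_nonneg in auto)

lemma slope_margin_nonneg: "0 \<le> slope_margin"
  using \<delta>_le_H H_pos by (simp add: field_simps)

lemma Vpot_le_on_ramp_nbhd:
  assumes x: "x \<in> ramp_nbhd"
  shows "V x \<le> K0 - L * real n powr (\<kappa> - 1) * slope_margin"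
proof -
  let ?P = "real n powr (\<kappa> - 1)"
  have slope: "2 * t - (4 + 2 * \<delta>) / H \<le> 2 * x / H" if "t * H - 2 - \<delta> \<le> x" for t
  proof -
    have "2 * (t * H - 2 - \<delta>) / H \<le> 2 * x / H" using that H_pos by (intro divide_right_mono) auto
    thus ?thesis using H_pos by (simp add: field_simps)
  qed
  obtain Q s where V_eq: "V x = K0 + L * (Q * s)" and "?P \<le> Q" and "s \<le> - slope_margin"
  proof (cases "x < real n * H")
    case True
    have m: "real (n - 1) = real n - 1" "1 \<le> n - 1" using n_ge_2 by auto
    have x0: "real n * H - 2 - \<delta> \<le> x" using x H_pos by (auto simp: algebra_simps)
    hence "real (n - 1) * H \<le> x" using m H_gt_4 \<delta>_le_1 by (auto simp: algebra_simps)
    hence "V x = K0 + L * (?P * (2 * (real n - 1) + 1 - 2 * x / H))"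
      using Vpot_on_block[OF H_pos m(2)] True m by simp
    moreover have "2 * (real n - 1) + 1 - 2 * x / H \<le> - slope_margin" using slope[OF x0] by simp
    ultimately show ?thesis using that by blast
  next
    case False
    hence x_in: "(real n + 1) * H - 2 - \<delta> \<le> x" "x < (real n + 1) * H" using x by auto
    hence "V x = K0 + L * ((real n + 1) powr (\<kappa> - 1) * (2 * real n + 1 - 2 * x / H))"
      using Vpot_on_block[OF H_pos _ _ x_in(2)] False n_ge_2 by simp
    moreover have "2 * real n + 1 - 2 * x / H \<le> - slope_margin"
      using slope[OF x_in(1)] by (simp add: algebra_simps)
    moreover have "?P \<le> (real n + 1) powr (\<kappa> - 1)" using kappa_gt_1 by (intro powr_mono2) auto
    ultimately show ?thesis using that by blast
  qed
  have "Q * s \<le> Q * - slope_margin"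
    using \<open>s \<le> - slope_margin\<close> \<open>?P \<le> Q\<close> by (intro mult_left_mono) (auto intro: order_trans[rotated])
  also have "\<dots> \<le> ?P * - slope_margin"
    using \<open>?P \<le> Q\<close> slope_margin_nonneg by (intro mult_right_mono_neg) auto
  finally have "L * (Q * s) \<le> L * (?P * - slope_margin)" using L_pos by (simp add: mult_left_mono)
  thus ?thesis unfolding V_eq by (simp add: algebra_simps)
qed

lemma log_density_le_on_ramp_nbhd:
  assumes "x \<in> ramp_nbhd"
  shows "log_density x \<le> ramp_max"
proof -
  have "0 < real n * H - 2 - \<delta>" using nH_ge_8 \<delta>_le_1 by linarith
  moreover have "real n * H - 2 - \<delta> \<le> x" using assms H_pos by (auto simp: algebra_simps)
  ultimately have "(real n * H - 2 - \<delta>) powr \<kappa> \<le> \<bar>x\<bar> powr \<kappa>"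
    using kappa_gt_1 by (intro powr_mono2) auto
  thus ?thesis using Vpot_le_on_ramp_nbhd[OF assms] unfolding log_density_def by simp
qed

lemma log_density_ge_on_plateau:
  assumes x: "x \<in> plateau"
  shows "plateau_min \<le> log_density x"
proof -
  have x1: "real n * H \<le> x" "x \<le> real n * H + \<delta>" using x by auto
  hence "0 \<le> x" using nH_ge_8 by linarith
  hence power: "\<bar>x\<bar> powr \<kappa> \<le> (real n * H + \<delta>) powr \<kappa>"
    using x1 kappa_gt_1 by (intro powr_mono2) auto
  have "x < (real n + 1) * H" using x1 H_gt_4 \<delta>_le_1 by (simp add: algebra_simps)
  hence V_eq: "V x = K0 + L * ((real n + 1) powr (\<kappa> - 1) * (2 * real n + 1 - 2 * x / H))"
    using Vpot_on_block[OF H_pos _ x1(1)] n_ge_2 by simp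
  have "2 * x / H \<le> 2 * (real n * H + \<delta>) / H" using x1 H_pos by (intro divide_right_mono) auto
  moreover have "2 * (real n * H + \<delta>) / H = 2 * real n + 2 * \<delta> / H" using H_pos by (simp add: field_simps)
  ultimately have slope: "1 - 2 * \<delta> / H \<le> 2 * real n + 1 - 2 * x / H" by simp
  have slope_nonneg: "0 \<le> 1 - 2 * \<delta> / H" using H_gt_4 \<delta>_le_1 by (simp add: field_simps)
  have "real n powr (\<kappa> - 1) \<le> (real n + 1) powr (\<kappa> - 1)" using kappa_gt_1 by (intro powr_mono2) auto
  hence "real n powr (\<kappa> - 1) * (1 - 2 * \<delta> / H) \<le> (real n + 1) powr (\<kappa> - 1) * (2 * real n + 1 - 2 * x / H)"
    using slope slope_nonneg by (intro mult_mono) auto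
  hence "L * real n powr (\<kappa> - 1) * (1 - 2 * \<delta> / H) \<le> V x - K0"
    using V_eq L_pos mult_left_mono[of _ _ L] by (simp add: mult.assoc)
  thus ?thesis using power unfolding log_density_def by simp
qed

text \<open>The jump of V at nH is about 2 L n^{\<kappa>-1}, while -|x|^\<kappa> drops by at most
  \<kappa> (nH+\<delta>)^{\<kappa>-1} (2+2\<delta>) \<le> \<kappa> n^{\<kappa>-1} (H+\<delta>)^{\<kappa>-1} (2+2\<delta>) across ramp_nbhd and plateau.\<close>
lemma log_density_gap: "real n powr (\<kappa> - 1) * jump_margin \<delta> \<le> plateau_min - ramp_max"
proof -
  let ?P = "real n powr (\<kappa> - 1)"
  have "(real n * H + \<delta>) powr \<kappa> - (real n * H - 2 - \<delta>) powr \<kappa>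
      \<le> \<kappa> * (real n * H + \<delta>) powr (\<kappa> - 1) * (2 + 2 * \<delta>)"
    using powr_diff_le_mvt[of "real n * H - 2 - \<delta>" "real n * H + \<delta>" \<kappa>] nH_ge_8 \<delta>_pos \<delta>_le_1 kappa_gt_1
    by (simp add: algebra_simps)
  also have "\<dots> \<le> \<kappa> * (?P * (H + \<delta>) powr (\<kappa> - 1)) * (2 + 2 * \<delta>)"
  proof -
    have "real n * H + \<delta> \<le> real n * (H + \<delta>)" using n_ge_2 \<delta>_pos by (simp add: algebra_simps)
    hence "(real n * H + \<delta>) powr (\<kappa> - 1) \<le> (real n * (H + \<delta>)) powr (\<kappa> - 1)"
      using nH_ge_8 kappa_gt_1 \<delta>_pos by (intro powr_mono2) auto
    also have "\<dots> = ?P * (H + \<delta>) powr (\<kappa> - 1)" using \<delta>_pos H_pos by (simp add: powr_mult)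
    finally show ?thesis using kappa_gt_1 \<delta>_pos by (intro mult_right_mono mult_left_mono) auto
  qed
  finally have "(real n * H + \<delta>) powr \<kappa> - (real n * H - 2 - \<delta>) powr \<kappa>
      \<le> ?P * (\<kappa> * (2 + 2 * \<delta>) * (H + \<delta>) powr (\<kappa> - 1))" by (simp add: algebra_simps)
  moreover have "(1 - 2 * \<delta> / H) + slope_margin = 2 - (4 + 4 * \<delta>) / H"
    using H_pos by (simp add: field_simps)
  ultimately show ?thesis unfolding jump_margin_def by (simp add: algebra_simps)
qed

lemma measure_ramp_nbhd_le: "measure \<nu> ramp_nbhd \<le> c_kappa \<kappa> * exp ramp_max * (4 + 2 * \<delta>)"
proof -
  have "measure lborel ramp_nbhd \<le> (2 + \<delta>) + (2 + \<delta>)"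
    using measure_Un_le[of "{real n * H - 2 - \<delta> ..< real n * H}" lborel
        "{(real n + 1) * H - 2 - \<delta> ..< (real n + 1) * H}"] \<delta>_pos by simp
  moreover have "measure \<nu> ramp_nbhd \<le> c_kappa \<kappa> * exp ramp_max * measure lborel ramp_nbhd"
    using log_density_le_on_ramp_nbhd
    using \<delta>_pos by (intro measure_muV_le le_less_trans[OF emeasure_subadditive]) auto
  ultimately show ?thesis
    using c_kappa_nonneg[of \<kappa>] mult_left_mono[of _ _ "c_kappa \<kappa> * exp ramp_max"] by fastforce
qed

lemma measure_plateau_ge: "c_kappa \<kappa> * exp plateau_min * \<delta> \<le> measure \<nu> plateau"
  using measure_muV_ge[of plateau plateau_min] log_density_ge_on_plateau \<delta>_pos by simp

lemma ramp_nbhd_mass_negligible: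
  assumes "K > 0" and "ln (K * (4 + 2 * \<delta>) / \<delta>) < plateau_min - ramp_max"
  shows "K * measure \<nu> ramp_nbhd < measure \<nu> plateau"
proof -
  let ?X = "K * (4 + 2 * \<delta>)"
  have "0 < ?X / \<delta>" using assms(1) \<delta>_pos by simp
  hence "?X / \<delta> = exp (ln (?X / \<delta>))" by simp
  also have "\<dots> < exp (plateau_min - ramp_max)" using assms(2) by (simp only: exp_less_cancel_iff)
  also have "\<dots> = exp plateau_min / exp ramp_max" by (rule exp_diff)
  finally have "?X * exp ramp_max / \<delta> < exp plateau_min" by (simp add: pos_less_divide_eq)
  hence "exp ramp_max * ?X < exp plateau_min * \<delta>"
    using \<delta>_pos by (simp add: pos_divide_less_eq mult.commute)
  hence "c_kappa \<kappa> * (exp ramp_max * ?X) < c_kappa \<kappa> * (exp plateau_min * \<delta>)"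
    using c_kappa_pos by simp
  moreover have "K * measure \<nu> ramp_nbhd \<le> K * (c_kappa \<kappa> * exp ramp_max * (4 + 2 * \<delta>))"
    using measure_ramp_nbhd_le assms(1) by simp
  ultimately show ?thesis using measure_plateau_ge by (simp add: algebra_simps)
qed


lemma integrable_bump: "integrable \<nu> bump"
  and integrable_bump_sq: "integrable \<nu> (\<lambda>x. (bump x)\<^sup>2)"
  using trapezoid_nonneg trapezoid_le_1
  by (intro integrable_muV_bounded[of _ 1]; auto simp: abs_le_iff power_le_one)+

lemma bump_in_form_closure:
  "form_closure \<nu> (classA (mu \<kappa>) (qker \<kappa> \<alpha>)) (EV (mu \<kappa>) (qker \<kappa> \<alpha>) V) bump
     (EV (mu \<kappa>) (qker \<kappa> \<alpha>) V bump)"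
  using lipschitz_in_classA[OF trapezoid_measurable bounded_range_trapezoid \<delta>_pos
      trapezoid_lipschitz[OF \<delta>_pos]] integrable_bump_sq
  by (intro form_closure_of_mem EV_zero) auto

lemma measure_plateau_le_bump_sq: "measure \<nu> plateau \<le> (LINT x|\<nu>. (bump x)\<^sup>2)"
proof -
  have "integral\<^sup>L \<nu> (indicator plateau) \<le> (LINT x|\<nu>. (bump x)\<^sup>2)"
    using bump_on_plateau
    by (intro integral_mono[OF integrable_muV_indicator integrable_bump_sq]) (auto simp: indicator_def)
  thus ?thesis by simp
qed

lemma mean_bump_le: "(LINT x|\<nu>. bump x) \<le> (LINT x|\<nu>. (bump x)\<^sup>2) + measure \<nu> ramp_nbhd"
proof -
  have "bump x \<le> (bump x)\<^sup>2 + indicator ramp_nbhd x" for x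
  proof (cases "x \<in> ramp_nbhd")
    case True
    hence "indicator ramp_nbhd x = (1::real)" by simp
    moreover have "bump x \<le> 1" by (rule trapezoid_le_1)
    ultimately show ?thesis using zero_le_power2[of "bump x"] by linarith
  next
    case False
    thus ?thesis using bump_outside_ramp_nbhd[OF False] by auto
  qed
  hence "(LINT x|\<nu>. bump x) \<le> (LINT x|\<nu>. (bump x)\<^sup>2 + indicator ramp_nbhd x)"
    by (intro integral_mono[OF integrable_bump Bochner_Integration.integrable_add[OF
          integrable_bump_sq integrable_muV_indicator]]) auto
  thus ?thesis using integrable_bump_sq integrable_muV_indicator[of ramp_nbhd] by simp
qed

lemma mean_bump_le_tail: "(LINT x|\<nu>. bump x) \<le> measure \<nu> {real n * H - 2 ..}"
proof -
  have "(LINT x|\<nu>. bump x) \<le> integral\<^sup>L \<nu> (indicator {real n * H - 2 ..})"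
    using bump_le_tail_indicator by (intro integral_mono[OF integrable_bump integrable_muV_indicator]) auto
  thus ?thesis by simp
qed

end

lemma jump_margin_0_pos: "0 < jump_margin 0"
proof -
  have "H powr \<kappa> = H * H powr (\<kappa> - 1)" using H_pos by (simp add: powr_diff)
  hence "H * (\<kappa> * H powr (\<kappa> - 1)) < L * (H - 2)"
    using L_gt H_gt_4 by (simp add: pos_divide_less_eq mult.left_commute)
  hence "2 * (H * (\<kappa> * H powr (\<kappa> - 1))) / H < 2 * (L * (H - 2)) / H"
    using H_pos by (intro divide_strict_right_mono) auto
  moreover have "2 * (L * (H - 2)) / H = L * (2 - 4 / H)" using H_pos by (simp add: field_simps)
  moreover have "2 * (H * (\<kappa> * H powr (\<kappa> - 1))) / H = \<kappa> * 2 * H powr (\<kappa> - 1)" using H_pos by simp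
  moreover have "jump_margin 0 = L * (2 - 4 / H) - \<kappa> * 2 * H powr (\<kappa> - 1)"
    by (simp add: jump_margin_def)
  ultimately show ?thesis by linarith
qed

lemma jump_margin_pos_exists: "\<exists>\<delta>. 0 < \<delta> \<and> \<delta> \<le> 1 \<and> 2 * \<delta> \<le> H - 4 \<and> jump_margin \<delta> > 0"
proof -
  have "(jump_margin \<longlongrightarrow> jump_margin 0) (at_right 0)"
    unfolding jump_margin_def using H_pos by (intro tendsto_intros) auto
  hence "eventually (\<lambda>d. 0 < jump_margin d) (at_right 0)"
    using jump_margin_0_pos by (rule order_tendstoD(1))
  then obtain b where "b > 0" and b: "\<And>d. d > 0 \<Longrightarrow> d < b \<Longrightarrow> jump_margin d > 0"
    unfolding eventually_at_right_field by auto
  define \<delta> where "\<delta> = min (b / 2) (min 1 ((H - 4) / 2))"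
  have "0 < \<delta>" "\<delta> < b" "\<delta> \<le> 1" "\<delta> \<le> (H - 4) / 2"
    using \<open>b > 0\<close> H_gt_4 by (auto simp: \<delta>_def min_def)
  thus ?thesis using b by auto
qed

lemma eventually_tail_measure_small:
  "eventually (\<lambda>n. measure \<nu> {real n * H - 2 ..} < 1/2) sequentially"
proof -
  interpret finite_measure \<nu> by (rule finite_measure_muV)
  let ?A = "\<lambda>n::nat. {real n * H - 2 ..}"
  have "decseq ?A"
    unfolding decseq_def using H_pos by (auto intro: order_trans[OF mult_right_mono])
  hence "(\<lambda>n. measure \<nu> (?A n)) \<longlonglongrightarrow> measure \<nu> (\<Inter>n. ?A n)"
    by (intro finite_Lim_measure_decseq) auto
  moreover have "(\<Inter>n. ?A n) = {}"
  proof (intro equals0I)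
    fix x assume x: "x \<in> (\<Inter>n. ?A n)"
    obtain n :: nat where "x + 3 < real n * H" using reals_Archimedean3[OF H_pos] by blast
    moreover have "real n * H - 2 \<le> x" using x by auto
    ultimately show False by linarith
  qed
  ultimately have "(\<lambda>n. measure \<nu> (?A n)) \<longlonglongrightarrow> 0" by simp
  thus ?thesis by (rule order_tendstoD) simp
qed

lemma eventually_powr_margin_large:
  assumes "D > 0"
  shows "eventually (\<lambda>n. M < real n powr (\<kappa> - 1) * D) sequentially"
proof -
  have "filterlim (\<lambda>n. D * real n powr (\<kappa> - 1)) at_top sequentially"
    using assms kappa_gt_1
    by (intro filterlim_tendsto_pos_mult_at_top[OF tendsto_const]
        filterlim_compose[OF real_powr_at_top filterlim_real_sequentially]) auto
  thus ?thesis by (simp add: filterlim_at_top_dense mult.commute)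
qed

lemma poincare_fails:
  assumes "C > 0"
  shows "\<exists>f c. form_closure \<nu> (classA (mu \<kappa>) (qker \<kappa> \<alpha>)) (EV (mu \<kappa>) (qker \<kappa> \<alpha>) V) f c
          \<and> \<not> ((LINT x|\<nu>. (f x)\<^sup>2) \<le> C * c + (LINT x|\<nu>. f x)\<^sup>2)"
proof -
  obtain \<delta> where \<delta>: "0 < \<delta>" "\<delta> \<le> 1" "2 * \<delta> \<le> H - 4" and margin: "jump_margin \<delta> > 0"
    using jump_margin_pos_exists by blast
  define G where "G = 2 * c_kappa \<kappa> / \<delta>\<^sup>2"
  define K where "K = 2 * (1 + C * G)"
  have "K > 0" using assms c_kappa_nonneg[of \<kappa>] by (simp add: K_def G_def add_pos_nonneg)
  obtain n where n: "n \<ge> 2" and tail: "measure \<nu> {real n * H - 2 ..} < 1/2"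
    and large: "ln (K * (4 + 2 * \<delta>) / \<delta>) < real n powr (\<kappa> - 1) * jump_margin \<delta>"
    using eventually_conj[OF eventually_ge_at_top[of 2] eventually_conj[OF
        eventually_tail_measure_small eventually_powr_margin_large[OF margin]]]
    unfolding eventually_sequentially by blast
  have "ln (K * (4 + 2 * \<delta>) / \<delta>) < plateau_min n \<delta> - ramp_max n \<delta>"
    using large log_density_gap[OF n \<delta>] by linarith
  hence "K * measure \<nu> (ramp_nbhd n \<delta>) < measure \<nu> (plateau n \<delta>)"
    by (rule ramp_nbhd_mass_negligible[OF n \<delta> \<open>K > 0\<close>])
  hence "\<not> ((LINT x|\<nu>. (bump n \<delta> x)\<^sup>2)
      \<le> C * EV (mu \<kappa>) (qker \<kappa> \<alpha>) V (bump n \<delta>) + (LINT x|\<nu>. bump n \<delta> x)\<^sup>2)"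
    using measure_plateau_le_bump_sq[OF n \<delta>] mean_bump_le[OF n \<delta>] mean_bump_le_tail[OF n \<delta>]
      tail EV_bump_le[OF n \<delta>] assms
    by (intro poincare_violation_arith[where G = G]) (auto simp: K_def G_def trapezoid_nonneg)
  thus ?thesis using bump_in_form_closure[OF n \<delta>] by blast
qed

end

theorem proposition2p5:
  fixes \<kappa> \<alpha> H L K0 :: real
  assumes "\<kappa> > 1" and "0 < \<alpha>" and "\<alpha> < 1"
    and "H > 4" and "L > \<kappa> * H powr \<kappa> / (H - 2)"
    and "(LINT x|mu \<kappa>. exp (Vpot \<kappa> H L K0 x)) = 1"
  shows "(\<exists>C1>0. \<exists>K. \<forall>x::real.
            - C1 * (1 + \<bar>x\<bar> powr (\<kappa> - 1)) - K \<le> Vpot \<kappa> H L K0 x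
          \<and> Vpot \<kappa> H L K0 x \<le> C1 * (1 + \<bar>x\<bar> powr (\<kappa> - 1)) + K)
       \<and> (\<forall>C>0. \<exists>f c.
            form_closure (muV (mu \<kappa>) (Vpot \<kappa> H L K0))
              (classA (mu \<kappa>) (qker \<kappa> \<alpha>))
              (EV (mu \<kappa>) (qker \<kappa> \<alpha>) (Vpot \<kappa> H L K0)) f c
          \<and> \<not> ((LINT x|muV (mu \<kappa>) (Vpot \<kappa> H L K0). (f x)\<^sup>2)
                 \<le> C * c + (LINT x|muV (mu \<kappa>) (Vpot \<kappa> H L K0). f x)\<^sup>2))"
proof -
  interpret potential_perturbation \<kappa> \<alpha> H L K0
    using assms by unfold_locales auto
  show ?thesis
    using Vpot_growth_bound[of H L \<kappa> K0] H_gt_4 L_pos kappa_gt_1 poincare_fails by auto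
qed

end
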